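(* Let $X$ be an $\omega$ type $P$-space. Then $\Sigma\mathcal O(X)$ is sober.
   Context: $\mathcal O(X)$ is the lattice of open subsets of $X$ ordered by inclusion, and $\Sigma\mathcal O(X)$ is this lattice with its Scott topology (a set $U$ is Scott open iff it is an upper set and for every directed $D$, $\bigvee D\in U$ implies $D\cap U\neq\emptyset$). A space is an $\omega$ type space if it has a subbase consisting of countable subsets; it is a $P$-space if countable intersections of open sets are open. A $T_0$ space is sober if every irreducible closed set equals $\overline{\{x\}}$ for some point $x$. *)

theory Defs
  imports "HOL-Analysis.Analysis"
begin

definition omega_type_space :: "'a topology \<Rightarrow> bool" where
  "omega_type_space X \<longleftrightarrow>
     (\<exists>S. X = topology_generated_by S \<and> (\<forall>s\<in>S. countable s))"

definition P_space :: "'a topology \<Rightarrow> bool" where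
  "P_space X \<longleftrightarrow>
     (\<forall>F. countable F \<and> F \<noteq> {} \<and> (\<forall>U\<in>F. openin X U) \<longrightarrow> openin X (\<Inter>F))"

definition directed_opens :: "'a topology \<Rightarrow> 'a set set \<Rightarrow> bool" where
  "directed_opens X D \<longleftrightarrow>
     D \<noteq> {} \<and> (\<forall>U\<in>D. openin X U) \<and>
     (\<forall>U\<in>D. \<forall>V\<in>D. \<exists>W\<in>D. U \<subseteq> W \<and> V \<subseteq> W)"

definition scott_open_opens :: "'a topology \<Rightarrow> 'a set set \<Rightarrow> bool" where
  "scott_open_opens X \<U> \<longleftrightarrow>
     \<U> \<subseteq> {U. openin X U} \<and>
     (\<forall>U V. U \<in> \<U> \<and> openin X V \<and> U \<subseteq> V \<longrightarrow> V \<in> \<U>) \<and>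
     (\<forall>D. directed_opens X D \<and> \<Union>D \<in> \<U> \<longrightarrow> D \<inter> \<U> \<noteq> {})"

definition Sigma_O :: "'a topology \<Rightarrow> 'a set topology" where
  "Sigma_O X = topology (scott_open_opens X)"

definition irreducible_closed :: "'a topology \<Rightarrow> 'a set \<Rightarrow> bool" where
  "irreducible_closed X C \<longleftrightarrow>
     closedin X C \<and> C \<noteq> {} \<and>
     (\<forall>A B. closedin X A \<and> closedin X B \<and> C \<subseteq> A \<union> B \<longrightarrow> C \<subseteq> A \<or> C \<subseteq> B)"

definition sober :: "'a topology \<Rightarrow> bool" where
  "sober X \<longleftrightarrow> t0_space X \<and>
     (\<forall>C. irreducible_closed X C \<longrightarrow> (\<exists>x\<in>topspace X. C = X closure_of {x}))"

end

theory Submission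
  imports Defs
begin

text \<open>In an \<open>\<omega>\<close> type P-space every point \<open>x\<close> has a least open neighbourhood: intersect a
  countable subbasic open set \<open>s \<ni> x\<close> with, for each of the countably many \<open>y \<in> s\<close> that can be
  separated from \<open>x\<close>, an open set containing \<open>x\<close> but not \<open>y\<close>. So every open set is the union of
  the least neighbourhoods of its points. Let \<open>\<C>\<close> be an irreducible Scott closed family of open
  sets. Irreducibility puts every finite subset of \<open>\<Union>\<C>\<close> inside a single member of \<open>\<C>\<close>, hence the
  unions of least neighbourhoods of finite subsets of \<open>\<Union>\<C>\<close> form a directed subfamily of the
  lower set \<open>\<C>\<close> with union \<open>\<Union>\<C>\<close>. Scott closedness gives \<open>\<Union>\<C> \<in> \<C>\<close>, and \<open>\<C>\<close> is the closure
  of the point \<open>\<Union>\<C>\<close>.\<close>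

lemma scott_open_opensI:
  assumes "\<U> \<subseteq> {U. openin X U}"
    and "\<And>U V. U \<in> \<U> \<Longrightarrow> openin X V \<Longrightarrow> U \<subseteq> V \<Longrightarrow> V \<in> \<U>"
    and "\<And>D. directed_opens X D \<Longrightarrow> \<Union>D \<in> \<U> \<Longrightarrow> D \<inter> \<U> \<noteq> {}"
  shows "scott_open_opens X \<U>"
  using assms unfolding scott_open_opens_def by blast

lemma scott_open_opens_openin: "scott_open_opens X \<U> \<Longrightarrow> U \<in> \<U> \<Longrightarrow> openin X U"
  unfolding scott_open_opens_def by blast

lemma scott_open_opens_upclosed:
  "scott_open_opens X \<U> \<Longrightarrow> U \<in> \<U> \<Longrightarrow> openin X V \<Longrightarrow> U \<subseteq> V \<Longrightarrow> V \<in> \<U>"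
  unfolding scott_open_opens_def by blast

lemma scott_open_opens_directed:
  "scott_open_opens X \<U> \<Longrightarrow> directed_opens X D \<Longrightarrow> \<Union>D \<in> \<U> \<Longrightarrow> \<exists>U\<in>D. U \<in> \<U>"
  unfolding scott_open_opens_def by blast

lemma scott_open_opens_Int:
  assumes S: "scott_open_opens X S" and T: "scott_open_opens X T"
  shows "scott_open_opens X (S \<inter> T)"
proof (rule scott_open_opensI)
  show "S \<inter> T \<subseteq> {U. openin X U}"
    using scott_open_opens_openin[OF S] by blast
  show "V \<in> S \<inter> T" if "U \<in> S \<inter> T" "openin X V" "U \<subseteq> V" for U V
    using that scott_open_opens_upclosed[OF S] scott_open_opens_upclosed[OF T] by blast
  fix D assume D: "directed_opens X D" "\<Union>D \<in> S \<inter> T"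
  obtain a b where ab: "a \<in> D" "a \<in> S" "b \<in> D" "b \<in> T"
    using scott_open_opens_directed[OF S D(1)] scott_open_opens_directed[OF T D(1)] D(2) by blast
  then obtain W where W: "W \<in> D" "a \<subseteq> W" "b \<subseteq> W" "openin X W"
    using D(1) unfolding directed_opens_def by blast
  then have "W \<in> S \<inter> T"
    using ab scott_open_opens_upclosed[OF S] scott_open_opens_upclosed[OF T] by blast
  with W(1) show "D \<inter> (S \<inter> T) \<noteq> {}" by blast
qed

lemma scott_open_opens_Union:
  assumes \<K>: "\<And>S. S \<in> \<K> \<Longrightarrow> scott_open_opens X S"
  shows "scott_open_opens X (\<Union>\<K>)"
proof (rule scott_open_opensI)
  show "\<Union>\<K> \<subseteq> {U. openin X U}"
    using \<K> scott_open_opens_openin by blast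
  show "V \<in> \<Union>\<K>" if "U \<in> \<Union>\<K>" "openin X V" "U \<subseteq> V" for U V
    using that \<K> scott_open_opens_upclosed by blast
  fix D assume D: "directed_opens X D" "\<Union>D \<in> \<Union>\<K>"
  then obtain S where "S \<in> \<K>" "\<Union>D \<in> S" by blast
  then show "D \<inter> \<Union>\<K> \<noteq> {}"
    using scott_open_opens_directed[OF \<K> D(1)] by blast
qed

lemma istopology_scott_open_opens: "istopology (scott_open_opens X)"
  unfolding istopology_def using scott_open_opens_Int scott_open_opens_Union by blast

lemma openin_Sigma_O: "openin (Sigma_O X) \<U> \<longleftrightarrow> scott_open_opens X \<U>"
  unfolding Sigma_O_def by (simp add: topology_inverse'[OF istopology_scott_open_opens])

lemma scott_open_opens_all: "scott_open_opens X {U. openin X U}"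
  by (rule scott_open_opensI) (auto simp: directed_opens_def)

lemma topspace_Sigma_O: "topspace (Sigma_O X) = {U. openin X U}"
proof
  show "topspace (Sigma_O X) \<subseteq> {U. openin X U}"
  proof
    fix U assume "U \<in> topspace (Sigma_O X)"
    then obtain \<U> where "U \<in> \<U>" "openin (Sigma_O X) \<U>"
      unfolding topspace_def by blast
    then show "U \<in> {U. openin X U}"
      by (auto simp: openin_Sigma_O scott_open_opens_openin)
  qed
  show "{U. openin X U} \<subseteq> topspace (Sigma_O X)"
    using openin_subset openin_Sigma_O scott_open_opens_all by blast
qed

lemma closedin_Sigma_O:
  "closedin (Sigma_O X) \<C> \<longleftrightarrow>
     \<C> \<subseteq> {U. openin X U} \<and> scott_open_opens X ({U. openin X U} - \<C>)"
  by (simp add: closedin_def topspace_Sigma_O openin_Sigma_O)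

lemma scott_open_opens_not_subset: "scott_open_opens X {V. openin X V \<and> \<not> V \<subseteq> U}"
  by (rule scott_open_opensI) (auto simp: directed_opens_def)

lemma directed_opens_finite_subset:
  assumes "directed_opens X D" "finite F" "F \<subseteq> \<Union>D"
  shows "\<exists>d\<in>D. F \<subseteq> d"
  using assms(2,3)
proof (induction F rule: finite_induct)
  case empty
  then show ?case using assms(1) by (auto simp: directed_opens_def)
next
  case (insert x F)
  then obtain d e where de: "d \<in> D" "F \<subseteq> d" "e \<in> D" "x \<in> e" by auto
  then obtain W where "W \<in> D" "d \<subseteq> W" "e \<subseteq> W"
    using assms(1) unfolding directed_opens_def by meson
  with de show ?case by blast
qed

lemma scott_open_opens_superset_finite:
  assumes "finite F"
  shows "scott_open_opens X {V. openin X V \<and> F \<subseteq> V}"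
proof (rule scott_open_opensI)
  fix D assume D: "directed_opens X D" "\<Union>D \<in> {V. openin X V \<and> F \<subseteq> V}"
  then obtain U where "U \<in> D" "F \<subseteq> U"
    using directed_opens_finite_subset assms by blast
  moreover have "openin X U"
    using D(1) \<open>U \<in> D\<close> by (simp add: directed_opens_def)
  ultimately show "D \<inter> {V. openin X V \<and> F \<subseteq> V} \<noteq> {}" by blast
qed auto

lemma closure_of_singleton_Sigma_O:
  assumes "openin X U"
  shows "Sigma_O X closure_of {U} = {V. openin X V \<and> V \<subseteq> U}"
proof (intro set_eqI iffI)
  fix V assume "V \<in> Sigma_O X closure_of {U}"
  then have V: "openin X V" "\<And>\<U>. V \<in> \<U> \<Longrightarrow> openin (Sigma_O X) \<U> \<Longrightarrow> U \<in> \<U>"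
    by (auto simp: in_closure_of topspace_Sigma_O)
  have "V \<subseteq> U"
  proof (rule ccontr)
    assume "\<not> V \<subseteq> U"
    with V(1) have "V \<in> {W. openin X W \<and> \<not> W \<subseteq> U}" by simp
    moreover have "openin (Sigma_O X) {W. openin X W \<and> \<not> W \<subseteq> U}"
      by (simp add: openin_Sigma_O scott_open_opens_not_subset)
    ultimately have "U \<in> {W. openin X W \<and> \<not> W \<subseteq> U}"
      by (rule V(2))
    then show False by simp
  qed
  with V(1) show "V \<in> {V. openin X V \<and> V \<subseteq> U}" by simp
next
  fix V assume V: "V \<in> {V. openin X V \<and> V \<subseteq> U}"
  have "U \<in> \<U>" if "V \<in> \<U>" "openin (Sigma_O X) \<U>" for \<U>
    using that V assms scott_open_opens_upclosed by (auto simp: openin_Sigma_O)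
  with V show "V \<in> Sigma_O X closure_of {U}"
    by (auto simp: in_closure_of topspace_Sigma_O)
qed

lemma t0_space_Sigma_O: "t0_space (Sigma_O X)"
  unfolding t0_space_closure_of_sing topspace_Sigma_O
  by (auto simp: closure_of_singleton_Sigma_O set_eq_iff)

lemma closedin_Sigma_O_down_closed:
  assumes "closedin (Sigma_O X) \<C>" "U \<in> \<C>" "openin X V" "V \<subseteq> U"
  shows "V \<in> \<C>"
proof (rule ccontr)
  assume "V \<notin> \<C>"
  with assms have "U \<in> {U. openin X U} - \<C>"
    using scott_open_opens_upclosed[of X "{U. openin X U} - \<C>" V U]
    unfolding closedin_Sigma_O by blast
  with assms(2) show False by blast
qed

lemma closedin_Sigma_O_directed_Union:
  assumes "closedin (Sigma_O X) \<C>" "directed_opens X D" "D \<subseteq> \<C>"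
  shows "\<Union>D \<in> \<C>"
proof (rule ccontr)
  assume "\<Union>D \<notin> \<C>"
  moreover have "openin X (\<Union>D)"
    using assms(2) by (auto simp: directed_opens_def)
  ultimately have "\<exists>U\<in>D. U \<in> {U. openin X U} - \<C>"
    using assms(1,2) scott_open_opens_directed unfolding closedin_Sigma_O by blast
  with assms(3) show False by blast
qed

lemma irreducible_closed_Sigma_O_finite_subset:
  assumes \<C>: "irreducible_closed (Sigma_O X) \<C>" and "finite F" "F \<subseteq> \<Union>\<C>"
  shows "\<exists>C\<in>\<C>. F \<subseteq> C"
  using assms(2,3)
proof (induction F rule: finite_induct)
  case empty
  then show ?case using \<C> by (auto simp: irreducible_closed_def)
next
  case (insert x F)
  then obtain C1 C2 where C12: "C1 \<in> \<C>" "F \<subseteq> C1" "C2 \<in> \<C>" "x \<in> C2" by auto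
  have \<C>_opens: "\<C> \<subseteq> {U. openin X U}"
    using \<C> by (simp add: irreducible_closed_def closedin_Sigma_O)
  let ?A = "\<lambda>G. \<C> - {V. openin X V \<and> G \<subseteq> V}"
  have closed_A: "closedin (Sigma_O X) (?A G)" if "finite G" for G
    using \<C> scott_open_opens_superset_finite[OF that]
    by (intro closedin_diff) (auto simp: irreducible_closed_def openin_Sigma_O)
  show ?case
  proof (rule ccontr)
    assume "\<not> (\<exists>C\<in>\<C>. insert x F \<subseteq> C)"
    then have "\<C> \<subseteq> ?A F \<union> ?A {x}" by blast
    then have "\<C> \<subseteq> ?A F \<or> \<C> \<subseteq> ?A {x}"
      using \<C> closed_A[OF insert.hyps(1)] closed_A[of "{x}"]
      unfolding irreducible_closed_def by blast
    then show False using C12 \<C>_opens by blast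
  qed
qed

definition least_open_nbhd :: "'a topology \<Rightarrow> 'a \<Rightarrow> 'a set" where
  "least_open_nbhd X x = \<Inter>{V. openin X V \<and> x \<in> V}"

text \<open>Equivalently, arbitrary intersections of open sets are open.\<close>
definition alexandrov_space :: "'a topology \<Rightarrow> bool" where
  "alexandrov_space X \<longleftrightarrow> (\<forall>x\<in>topspace X. openin X (least_open_nbhd X x))"

lemma mem_least_open_nbhd: "x \<in> least_open_nbhd X x"
  by (simp add: least_open_nbhd_def)

lemma least_open_nbhd_subset: "openin X V \<Longrightarrow> x \<in> V \<Longrightarrow> least_open_nbhd X x \<subseteq> V"
  by (auto simp: least_open_nbhd_def)

lemma openin_Union_least_open_nbhd:
  assumes "alexandrov_space X" "F \<subseteq> topspace X"
  shows "openin X (\<Union>(least_open_nbhd X ` F))"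
proof (rule openin_Union)
  show "openin X V" if "V \<in> least_open_nbhd X ` F" for V
    using that assms unfolding alexandrov_space_def by blast
qed

lemma directed_opens_Union_least_open_nbhd:
  assumes X: "alexandrov_space X" and A: "A \<subseteq> topspace X"
  shows "directed_opens X ((\<lambda>F. \<Union>(least_open_nbhd X ` F)) ` {F. finite F \<and> F \<subseteq> A})"
    (is "directed_opens X ?D")
  unfolding directed_opens_def
proof (intro conjI ballI)
  show "?D \<noteq> {}" by blast
  show "openin X U" if "U \<in> ?D" for U
    using that A openin_Union_least_open_nbhd[OF X] by auto
  fix U V assume "U \<in> ?D" "V \<in> ?D"
  then obtain F G where UV: "U = \<Union>(least_open_nbhd X ` F)" "V = \<Union>(least_open_nbhd X ` G)"
    and FG: "finite (F \<union> G)" "F \<union> G \<subseteq> A"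
    by auto
  have "\<Union>(least_open_nbhd X ` (F \<union> G)) \<in> ?D"
    using FG by (intro imageI) simp
  moreover have "U \<subseteq> \<Union>(least_open_nbhd X ` (F \<union> G))" "V \<subseteq> \<Union>(least_open_nbhd X ` (F \<union> G))"
    unfolding UV by auto
  ultimately show "\<exists>W\<in>?D. U \<subseteq> W \<and> V \<subseteq> W" by blast
qed

lemma Union_Union_least_open_nbhd:
  assumes "openin X A"
  shows "\<Union>((\<lambda>F. \<Union>(least_open_nbhd X ` F)) ` {F. finite F \<and> F \<subseteq> A}) = A"
    (is "\<Union>?D = A")
proof
  show "\<Union>?D \<subseteq> A"
    using least_open_nbhd_subset[OF assms] by blast
  show "A \<subseteq> \<Union>?D"
  proof
    fix x assume "x \<in> A"
    then have "\<Union>(least_open_nbhd X ` {x}) \<in> ?D"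
      by (intro imageI) simp
    then show "x \<in> \<Union>?D"
      using mem_least_open_nbhd[of x X] by blast
  qed
qed

lemma Union_in_closedin_Sigma_O:
  assumes X: "alexandrov_space X" and closed: "closedin (Sigma_O X) \<C>"
    and finite_subset: "\<And>F. finite F \<Longrightarrow> F \<subseteq> \<Union>\<C> \<Longrightarrow> \<exists>C\<in>\<C>. F \<subseteq> C"
  shows "\<Union>\<C> \<in> \<C>"
proof -
  have "\<C> \<subseteq> {U. openin X U}"
    using closed by (simp add: closedin_Sigma_O)
  then have open_Union: "openin X (\<Union>\<C>)"
    by (simp add: openin_Union subset_iff)
  then have top: "\<Union>\<C> \<subseteq> topspace X"
    by (rule openin_subset)
  define D where "D = (\<lambda>F. \<Union>(least_open_nbhd X ` F)) ` {F. finite F \<and> F \<subseteq> \<Union>\<C>}"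
  have "D \<subseteq> \<C>"
  proof
    fix W assume "W \<in> D"
    then obtain F where F: "W = \<Union>(least_open_nbhd X ` F)" "finite F" "F \<subseteq> \<Union>\<C>"
      unfolding D_def by blast
    then obtain C where C: "C \<in> \<C>" "F \<subseteq> C"
      using finite_subset by blast
    have "openin X C"
      using C(1) \<open>\<C> \<subseteq> {U. openin X U}\<close> by blast
    then have "W \<subseteq> C"
      unfolding F(1) using C(2) least_open_nbhd_subset[OF \<open>openin X C\<close>] by blast
    moreover have "openin X W"
      unfolding F(1) using F(3) top by (intro openin_Union_least_open_nbhd[OF X]) blast
    ultimately show "W \<in> \<C>"
      using closedin_Sigma_O_down_closed[OF closed C(1)] by blast
  qed
  moreover have "directed_opens X D"
    unfolding D_def using directed_opens_Union_least_open_nbhd[OF X top] .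
  ultimately have "\<Union>D \<in> \<C>"
    by (rule closedin_Sigma_O_directed_Union[OF closed, rotated])
  then show ?thesis
    unfolding D_def Union_Union_least_open_nbhd[OF open_Union] .
qed

lemma alexandrov_space_imp_sober_Sigma_O:
  assumes "alexandrov_space X"
  shows "sober (Sigma_O X)"
  unfolding sober_def
proof (intro conjI allI impI t0_space_Sigma_O)
  fix \<C> assume \<C>: "irreducible_closed (Sigma_O X) \<C>"
  then have closed: "closedin (Sigma_O X) \<C>"
    by (simp add: irreducible_closed_def)
  have top: "\<Union>\<C> \<in> \<C>"
    using Union_in_closedin_Sigma_O[OF assms closed]
      irreducible_closed_Sigma_O_finite_subset[OF \<C>] by blast
  have \<C>_opens: "\<C> \<subseteq> {U. openin X U}"
    using closed by (simp add: closedin_Sigma_O)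
  then have open_top: "openin X (\<Union>\<C>)"
    using top by blast
  have "Sigma_O X closure_of {\<Union>\<C>} = {V. openin X V \<and> V \<subseteq> \<Union>\<C>}"
    using closure_of_singleton_Sigma_O[OF open_top] .
  also have "\<dots> = \<C>"
    using \<C>_opens closedin_Sigma_O_down_closed[OF closed top] by auto
  finally show "\<exists>U\<in>topspace (Sigma_O X). \<C> = Sigma_O X closure_of {U}"
    using open_top by (auto simp: topspace_Sigma_O)
qed

lemma P_space_openin_least_open_nbhd:
  assumes X: "P_space X" and s: "openin X s" "countable s" "x \<in> s"
  shows "openin X (least_open_nbhd X x)"
proof -
  define N where "N = least_open_nbhd X x"
  have "\<forall>y. \<exists>V. y \<notin> N \<longrightarrow> openin X V \<and> x \<in> V \<and> y \<notin> V"
    unfolding N_def least_open_nbhd_def by blast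
  then obtain V where V: "\<And>y. y \<notin> N \<Longrightarrow> openin X (V y) \<and> x \<in> V y \<and> y \<notin> V y"
    by metis
  define F where "F = insert s (V ` (s - N))"
  have "countable F" "F \<noteq> {}" "\<forall>U\<in>F. openin X U"
    using s V unfolding F_def by auto
  then have "openin X (\<Inter>F)"
    using X unfolding P_space_def by blast
  moreover have "N \<subseteq> s"
    unfolding N_def using least_open_nbhd_subset s(1,3) .
  then have "\<Inter>F = N"
    using V unfolding F_def N_def least_open_nbhd_def by blast
  ultimately show ?thesis
    unfolding N_def by simp
qed

lemma omega_type_P_space_imp_alexandrov_space:
  assumes "omega_type_space X" and "P_space X"
  shows "alexandrov_space X"
  unfolding alexandrov_space_def
proof
  fix x assume "x \<in> topspace X"
  obtain \<S> where \<S>: "X = topology_generated_by \<S>" "\<forall>s\<in>\<S>. countable s"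
    using assms(1) unfolding omega_type_space_def by blast
  obtain s where "s \<in> \<S>" "x \<in> s"
    using \<open>x \<in> topspace X\<close> \<S>(1) by auto
  then have "openin X s" "countable s"
    using \<S> topology_generated_by_Basis by metis+
  then show "openin X (least_open_nbhd X x)"
    using P_space_openin_least_open_nbhd[OF assms(2)] \<open>x \<in> s\<close> by blast
qed

theorem corollary4p6:
  fixes X :: "'a topology"
  assumes "omega_type_space X" and "P_space X"
  shows "sober (Sigma_O X)"
  using alexandrov_space_imp_sober_Sigma_O omega_type_P_space_imp_alexandrov_space assms by blast

end
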